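(* Let $N\ge 1$, let $V$, $\Delta$, $\mathcal F$, $T_v$, $\mathcal W$, $s_0$, $\{x_1,\dots,x_N\}$, $\mathcal H_\Omega$ and $\mathcal H_{i_1\dots i_n}$ be as in the context. Then: (i) The subspaces $\mathcal H_\Omega$ and $\mathcal H_{i_1\dots i_n}$ ($n\ge1$, $i_1,\dots,i_n\in\{1,\dots,N\}$, $i_n\neq 1$) are mutually orthogonal, $$\mathcal H_\Omega\oplus\bigoplus_{n\ge1,\ i_1,\dots,i_n\in\{1,\dots,N\},\ i_n\neq1}\mathcal H_{i_1\dots i_n}=\mathcal F,$$ and each of them is a cyclic subspace for the operator $\mathcal W\Delta\mathcal W^*$. (ii) Let $S$ be the unilateral shift on $l^2(\mathbb{N}_0)$, $S(y_0,y_1,y_2,\dots)=(0,y_0,y_1,\dots)$, let $\operatorname{Re}S=\frac{S+S^*}{2}$ and let $P_{\delta_0}$ be the orthogonal projection onto $\delta_0$. The restriction of $\mathcal W\Delta\mathcal W^*$ to $\mathcal H_\Omega$ is unitarily equivalent to $D_\Omega:=(N+1)I-2\sqrt N\operatorname{Re}S-P_{\delta_0}$ on $l^2(\mathbb{N}_0)$, and for all $n\ge1$ and $i_1,\dots,i_n\in\{1,\dots,N\}$ with $i_n\neq1$, the restriction of $\mathcal W\Delta\mathcal W^*$ to $\mathcal H_{i_1\dots i_n}$ is unitarily equivalent to $D:=(N+1)I-2\sqrt N\operatorname{Re}S$ on $l^2(\mathbb{N}_0)$.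
   Context: $V$ is the set of finite words over $\{1,\dots,N\}$ including the empty word $\emptyset$; the $N$-ary tree has edges exactly the pairs $\{\omega,\omega i\}$ ($\omega\in V$, $i\in\{1,\dots,N\}$, $\omega i$ = $\omega$ with letter $i$ appended). $\Delta$ is the graph Laplacian $(\Delta v)(x)=\sum_{y\sim x}(v(x)-v(y))$ on $l^2(V)$ (bounded selfadjoint). Let $H=\mathbb{C}^N$ with orthonormal basis $e_1,\dots,e_N$, and let $\mathcal F=\mathbb{C}\Omega\oplus H\oplus H^{\otimes 2}\oplus\cdots$ be the full Fock space (Hilbert direct sum, $\Omega$ a unit vector). For $v\in H$ let $T_v$ on $\mathcal F$ be $T_v\Omega=v$, $T_v\xi=\xi\otimes v$ for $\xi\in H^{\otimes n}$, $n\ge1$. Let $\mathcal W:l^2(V)\to\mathcal F$ be the unitary with $\mathcal W\delta_\emptyset=\Omega$ and $\mathcal W\delta_{\omega_1\dots\omega_n}=e_{\omega_1}\otimes\cdots\otimes e_{\omega_n}$. Let $s_0=N^{-1/2}\sum_{i=1}^Ne_i$ and let $\{x_1,\dots,x_N\}$ be an orthonormal basis of $H$ with $x_1=s_0$. Define $\mathcal H_\Omega=\overline{\operatorname{span}}\{\Omega,\ s_0^{\otimes p}: p\ge1\}$ and, for $n\ge1$, $i_1,\dots,i_n\in\{1,\dots,N\}$ with $i_n\neq1$, $\mathcal H_{i_1\dots i_n}=\overline{\operatorname{span}}\{x_{i_1}\otimes\cdots\otimes x_{i_n}\otimes s_0^{\otimes p}: p\ge0\}$. *)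

theory Defs
  imports "HOL-Analysis.Analysis"
begin

definition ell2 :: "'a set \<Rightarrow> ('a \<Rightarrow> complex) set" where
  "ell2 A = {f. (\<forall>x. x \<notin> A \<longrightarrow> f x = 0) \<and> (\<lambda>x. (cmod (f x))^2) summable_on A}"

definition l2inner :: "'a set \<Rightarrow> ('a \<Rightarrow> complex) \<Rightarrow> ('a \<Rightarrow> complex) \<Rightarrow> complex" where
  "l2inner A f g = infsum (\<lambda>x. cnj (f x) * g x) A"

definition l2norm :: "'a set \<Rightarrow> ('a \<Rightarrow> complex) \<Rightarrow> real" where
  "l2norm A f = sqrt (infsum (\<lambda>x. (cmod (f x))^2) A)"

definition cspan :: "('a \<Rightarrow> complex) set \<Rightarrow> ('a \<Rightarrow> complex) set" where
  "cspan S = {f. \<exists>F c. finite F \<and> F \<subseteq> S \<and> f = (\<lambda>x. \<Sum>v\<in>F. c v * v x)}"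

definition closed_span :: "'a set \<Rightarrow> ('a \<Rightarrow> complex) set \<Rightarrow> ('a \<Rightarrow> complex) set" where
  "closed_span A S = {f \<in> ell2 A. \<forall>e>0. \<exists>g\<in>cspan S. l2norm A (\<lambda>x. f x - g x) < e}"

definition cyclic_subspace ::
  "'a set \<Rightarrow> (('a \<Rightarrow> complex) \<Rightarrow> ('a \<Rightarrow> complex)) \<Rightarrow> ('a \<Rightarrow> complex) set \<Rightarrow> bool" where
  "cyclic_subspace A T M \<longleftrightarrow> (\<exists>\<xi>\<in>M. M = closed_span A {(T ^^ k) \<xi> | k. True})"

definition unitarily_equivalent ::
  "'a set \<Rightarrow> (('a \<Rightarrow> complex) \<Rightarrow> ('a \<Rightarrow> complex)) \<Rightarrow> ('a \<Rightarrow> complex) set \<Rightarrow>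
   'b set \<Rightarrow> (('b \<Rightarrow> complex) \<Rightarrow> ('b \<Rightarrow> complex)) \<Rightarrow> ('b \<Rightarrow> complex) set \<Rightarrow> bool" where
  "unitarily_equivalent A T M B R K \<longleftrightarrow>
     (\<forall>f\<in>M. T f \<in> M) \<and>
     (\<exists>U. bij_betw U M K \<and>
        (\<forall>f\<in>M. \<forall>g\<in>M. \<forall>c. U (\<lambda>x. f x + c * g x) = (\<lambda>y. U f y + c * U g y)) \<and>
        (\<forall>f\<in>M. \<forall>g\<in>M. l2inner B (U f) (U g) = l2inner A f g) \<and>
        (\<forall>f\<in>M. U (T f) = R (U f)))"

definition words :: "nat \<Rightarrow> nat list set" where
  "words N = {w. set w \<subseteq> {1..N}}"

text \<open>Graph Laplacian: neighbours of w are the children w@[i] and (if w is nonempty) the parent.\<close>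
definition lap :: "nat \<Rightarrow> (nat list \<Rightarrow> complex) \<Rightarrow> (nat list \<Rightarrow> complex)" where
  "lap N v w = (if w \<in> words N then
      (of_nat N + (if w = [] then 0 else 1)) * v w - (\<Sum>i=1..N. v (w @ [i]))
      - (if w = [] then 0 else v (butlast w))
    else 0)"

text \<open>Full Fock space over C^N realized in its standard basis: e_{w1}\<otimes>...\<otimes>e_{wn} is identified with
  the word w1...wn (this is exactly the unitary W, which thus becomes the identity).
  Vectors of H = C^N are functions nat \<Rightarrow> complex read on {1..N}.
  Elementary tensor v_1 \<otimes> ... \<otimes> v_m (m = 0 gives the vacuum \<Omega>):\<close>
definition tensor :: "nat \<Rightarrow> (nat \<Rightarrow> complex) list \<Rightarrow> (nat list \<Rightarrow> complex)" where
  "tensor N vs = (\<lambda>w. if length w = length vs \<and> set w \<subseteq> {1..N}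
                      then (\<Prod>k<length w. (vs ! k) (w ! k)) else 0)"

definition s0 :: "nat \<Rightarrow> (nat \<Rightarrow> complex)" where
  "s0 N = (\<lambda>k. if k \<in> {1..N} then complex_of_real (1 / sqrt (real N)) else 0)"

definition H_Omega :: "nat \<Rightarrow> (nat list \<Rightarrow> complex) set" where
  "H_Omega N = closed_span (words N)
     ({tensor N []} \<union> {tensor N (replicate p (s0 N)) | p. p \<ge> 1})"

definition H_idx :: "nat \<Rightarrow> (nat \<Rightarrow> nat \<Rightarrow> complex) \<Rightarrow> nat list \<Rightarrow> (nat list \<Rightarrow> complex) set" where
  "H_idx N x I = closed_span (words N) {tensor N (map x I @ replicate p (s0 N)) | p. True}"

definition Idx :: "nat \<Rightarrow> nat list set" where
  "Idx N = {I. I \<noteq> [] \<and> set I \<subseteq> {1..N} \<and> last I \<noteq> 1}"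

definition shift :: "(nat \<Rightarrow> complex) \<Rightarrow> (nat \<Rightarrow> complex)" where
  "shift y k = (if k = 0 then 0 else y (k - 1))"

definition shift_adj :: "(nat \<Rightarrow> complex) \<Rightarrow> (nat \<Rightarrow> complex)" where
  "shift_adj y k = y (Suc k)"

definition ReS :: "(nat \<Rightarrow> complex) \<Rightarrow> (nat \<Rightarrow> complex)" where
  "ReS y k = (shift y k + shift_adj y k) / 2"

definition proj0 :: "(nat \<Rightarrow> complex) \<Rightarrow> (nat \<Rightarrow> complex)" where
  "proj0 y k = (if k = 0 then y 0 else 0)"

definition D_Omega :: "nat \<Rightarrow> (nat \<Rightarrow> complex) \<Rightarrow> (nat \<Rightarrow> complex)" where
  "D_Omega N y k = of_nat (N + 1) * y k - 2 * complex_of_real (sqrt (real N)) * ReS y k - proj0 y k"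

definition D_op :: "nat \<Rightarrow> (nat \<Rightarrow> complex) \<Rightarrow> (nat \<Rightarrow> complex)" where
  "D_op N y k = of_nat (N + 1) * y k - 2 * complex_of_real (sqrt (real N)) * ReS y k"

end

theory Submission
  imports Defs "HOL-Library.Function_Algebras" "Jordan_Normal_Form.Determinant"
begin

text \<open>The vectors \<open>y\<^sub>j = x\<^sub>j\<^sub>1 \<otimes> \<dots> \<otimes> x\<^sub>j\<^sub>n\<close>, \<open>j\<close> ranging over the words, form an
  orthonormal basis of the Fock space because the matrix \<open>(x i k)\<close> is unitary. Every word factors
  uniquely as \<open>j = b 1\<^sup>p\<close> with \<open>b\<close> empty or ending in a letter other than \<open>1\<close>, so the basis splits
  into chains \<open>(y\<^bsub>b 1\<^sup>p\<^esub>)\<^sub>p\<close>, and the chain of \<open>b\<close> spans \<open>H_idx N x b\<close>. On a chain the Laplacian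
  acts as a Jacobi matrix: summing over the children of a vertex contracts the last tensor factor
  against \<open>e\<^sub>1 + \<dots> + e\<^sub>N = \<surd>N s\<^sub>0\<close>, which gives \<open>\<surd>N y\<^bsub>b 1\<^sup>p\<^sup>+\<^sup>1\<^esub>\<close> along the chain and \<open>0\<close> at
  its foot (as \<open>x\<^sub>a \<bottom> s\<^sub>0\<close> for \<open>a \<noteq> 1\<close>), while the parent contributes \<open>\<surd>N y\<^bsub>b 1\<^sup>p\<^sup>-\<^sup>1\<^esub>\<close>.
  Hence the coordinates along a chain are a unitary onto \<open>l\<^sup>2(\<nat>\<^sub>0)\<close> intertwining \<open>\<Delta>\<close> with
  \<open>(N+1) - 2\<surd>N Re S\<close>, corrected by \<open>-P\<^sub>\<delta>\<^sub>0\<close> on the root chain, whose first vertex has no parent.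
  Cyclicity holds because \<open>\<Delta>\<^sup>k \<delta>\<^sub>0\<close> has coordinates only up to \<open>k\<close>, the last one being
  \<open>(-\<surd>N)\<^sup>k \<noteq> 0\<close>.\<close>

lemma orthonormal_rows_imp_orthonormal_columns:
  fixes x :: "nat \<Rightarrow> nat \<Rightarrow> complex"
  assumes "\<forall>i\<in>{1..N}. \<forall>j\<in>{1..N}. (\<Sum>k=1..N. cnj (x i k) * x j k) = (if i = j then 1 else 0)"
    and "a \<in> {1..N}" "a' \<in> {1..N}"
  shows "(\<Sum>i=1..N. x i a * cnj (x i a')) = (if a = a' then 1 else 0)"
proof -
  define A where "A = mat N N (\<lambda>(i,k). cnj (x (i+1) (k+1)))"
  define B where "B = mat N N (\<lambda>(k,j). x (j+1) (k+1))"
  have A: "A \<in> carrier_mat N N" and B: "B \<in> carrier_mat N N" by (auto simp: A_def B_def)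
  have "A * B = 1\<^sub>m N"
  proof (rule eq_matI)
    fix i j assume ij: "i < dim_row (1\<^sub>m N)" "j < dim_col (1\<^sub>m N)"
    have "(A * B) $$ (i, j) = (\<Sum>k<N. cnj (x (i+1) (k+1)) * x (j+1) (k+1))"
      using ij A B by (simp add: A_def B_def scalar_prod_def times_mat_def atLeast0LessThan)
    also have "\<dots> = (\<Sum>k=1..N. cnj (x (i+1) k) * x (j+1) k)"
      by (rule sum.reindex_bij_witness[of _ "\<lambda>k. k - 1" "\<lambda>k. k + 1"]) auto
    also have "\<dots> = 1\<^sub>m N $$ (i, j)" using ij assms(1) by auto
    finally show "(A * B) $$ (i, j) = 1\<^sub>m N $$ (i, j)" .
  qed (auto simp: A_def B_def)
  hence BA: "B * A = 1\<^sub>m N" using mat_mult_left_right_inverse[OF A B] by blast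
  have lt: "a - 1 < N" "a' - 1 < N" "a - 1 + 1 = a" "a' - 1 + 1 = a'" using assms(2,3) by auto
  have "(B * A) $$ (a - 1, a' - 1) = (\<Sum>i<N. x (i+1) a * cnj (x (i+1) a'))"
    using lt A B unfolding A_def B_def by (simp add: scalar_prod_def atLeast0LessThan)
  also have "\<dots> = (\<Sum>i=1..N. x i a * cnj (x i a'))"
    by (rule sum.reindex_bij_witness[of _ "\<lambda>k. k - 1" "\<lambda>k. k + 1"]) auto
  finally have "(if a - 1 = a' - 1 then 1 else 0) = (\<Sum>i=1..N. x i a * cnj (x i a'))"
    using BA lt by auto
  moreover have "(a - 1 = a' - 1) = (a = a')" using assms(2,3) by auto
  ultimately show ?thesis by simp
qed

lemma ell2_vanish: "f \<in> ell2 A \<Longrightarrow> x \<notin> A \<Longrightarrow> f x = 0"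
  by (auto simp: ell2_def)

lemma ell2_summable: "f \<in> ell2 A \<Longrightarrow> (\<lambda>x. (cmod (f x))^2) summable_on A"
  by (auto simp: ell2_def)

lemma ell2I: "(\<And>x. x \<notin> A \<Longrightarrow> f x = 0) \<Longrightarrow> (\<lambda>x. (cmod (f x))^2) summable_on A \<Longrightarrow> f \<in> ell2 A"
  by (auto simp: ell2_def)

lemma ell2_add:
  assumes f: "f \<in> ell2 A" and g: "g \<in> ell2 A"
  shows "(\<lambda>x. f x + g x) \<in> ell2 A"
proof (rule ell2I)
  show "x \<notin> A \<Longrightarrow> f x + g x = 0" for x using f g by (simp add: ell2_vanish)
  have bound: "(cmod (a + b))^2 \<le> 2 * (cmod a)^2 + 2 * (cmod b)^2" for a b
  proof -
    have "(cmod (a + b))^2 \<le> (cmod a + cmod b)^2" by (simp add: power_mono norm_triangle_ineq)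
    also have "\<dots> \<le> 2 * (cmod a)^2 + 2 * (cmod b)^2"
      by (smt (verit) zero_le_power2 power2_diff power2_sum)
    finally show ?thesis .
  qed
  have "(\<lambda>x. 2 * (cmod (f x))^2 + 2 * (cmod (g x))^2) summable_on A"
    by (intro summable_on_add summable_on_cmult_right ell2_summable f g)
  thus "(\<lambda>x. (cmod (f x + g x))^2) summable_on A"
    by (rule summable_on_comparison_test) (auto simp: bound)
qed

lemma ell2_scale:
  assumes f: "f \<in> ell2 A"
  shows "(\<lambda>x. c * f x) \<in> ell2 A"
proof (rule ell2I)
  show "x \<notin> A \<Longrightarrow> c * f x = 0" for x using f by (simp add: ell2_vanish)
  have "(\<lambda>x. (cmod c)^2 * (cmod (f x))^2) summable_on A"
    by (intro summable_on_cmult_right ell2_summable f)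
  thus "(\<lambda>x. (cmod (c * f x))^2) summable_on A"
    by (simp add: norm_mult power_mult_distrib)
qed

lemma ell2_zero: "(\<lambda>x. 0) \<in> ell2 A"
  by (rule ell2I) auto

lemma ell2_diff: "f \<in> ell2 A \<Longrightarrow> g \<in> ell2 A \<Longrightarrow> (\<lambda>x. f x - g x) \<in> ell2 A"
  using ell2_add[of f A "\<lambda>x. (-1) * g x"] ell2_scale[of g A "-1"] by simp

lemma summable_on_cnj_mult:
  assumes "f \<in> ell2 A" "g \<in> ell2 A"
  shows "(\<lambda>x. cnj (f x) * g x) summable_on A"
proof -
  have "(\<lambda>x. (cmod (f x))^2 + (cmod (g x))^2) summable_on A"
    by (intro summable_on_add ell2_summable assms)
  hence "(\<lambda>x. norm (cnj (f x) * g x)) summable_on A"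
  proof (rule summable_on_comparison_test)
    fix x
    have "2 * (cmod (f x) * cmod (g x)) \<le> (cmod (f x))^2 + (cmod (g x))^2"
      using zero_le_power2[of "cmod (f x) - cmod (g x)"] by (simp add: power2_diff)
    moreover have "0 \<le> cmod (f x) * cmod (g x)" by simp
    ultimately have "cmod (f x) * cmod (g x) \<le> (cmod (f x))^2 + (cmod (g x))^2" by linarith
    thus "norm (cnj (f x) * g x) \<le> (cmod (f x))^2 + (cmod (g x))^2" by (simp add: norm_mult)
  qed simp
  thus ?thesis using summable_on_iff_abs_summable_on_complex by blast
qed

lemma cnj_mult_self: "cnj z * z = complex_of_real ((cmod z)^2)"
  by (subst complex_norm_square) (rule mult.commute)

lemma sum_cnj_mult_self: "(\<Sum>w\<in>A. cnj (f w) * f w) = complex_of_real (\<Sum>w\<in>A. (cmod (f w))^2)"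
  by (simp only: cnj_mult_self of_real_sum)

lemma l2norm_nonneg: "l2norm A f \<ge> 0"
  unfolding l2norm_def by (simp add: infsum_nonneg)

lemma norm_le_l2norm:
  assumes "f \<in> ell2 A" "x \<in> A"
  shows "cmod (f x) \<le> l2norm A f"
proof -
  have "(cmod (f x))^2 \<le> infsum (\<lambda>x. (cmod (f x))^2) A"
    using finite_sum_le_infsum[of "\<lambda>x. (cmod (f x))^2" A "{x}"] assms ell2_summable by auto
  thus ?thesis unfolding l2norm_def by (simp add: real_le_rsqrt)
qed

text \<open>\<open>Function_Algebras\<close> supplies the additive structure.\<close>
definition cscale :: "complex \<Rightarrow> ('a \<Rightarrow> complex) \<Rightarrow> ('a \<Rightarrow> complex)" where
  "cscale c f = (\<lambda>x. c * f x)"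

interpretation cfun: Modules.module cscale
  by unfold_locales (auto simp: cscale_def fun_eq_iff algebra_simps)

lemma sum_fun_apply: "(sum g A) x = (\<Sum>a\<in>A. g a x)"
  by (induction A rule: infinite_finite_induct) auto

lemma cspan_eq_span: "cspan S = cfun.span S"
  unfolding cspan_def cfun.span_explicit
  by (auto simp: sum_fun_apply cscale_def fun_eq_iff)

lemma subspace_ell2: "cfun.subspace (ell2 A)"
  unfolding cfun.subspace_def
  using ell2_add ell2_zero ell2_scale by (auto simp: cscale_def plus_fun_def zero_fun_def)

lemma cspan_subset_ell2: "S \<subseteq> ell2 A \<Longrightarrow> cspan S \<subseteq> ell2 A"
  unfolding cspan_eq_span using subspace_ell2 cfun.span_minimal by blast

lemma closed_span_subset_ell2: "closed_span A S \<subseteq> ell2 A"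
  unfolding closed_span_def by auto

lemma closed_span_cong: "cspan S = cspan T \<Longrightarrow> closed_span A S = closed_span A T"
  unfolding closed_span_def by simp

lemma eq_0_if_norm_le_mult_all:
  fixes z :: "'a::real_normed_vector"
  assumes "\<And>e. e > 0 \<Longrightarrow> norm z \<le> K * e" "K \<ge> 0"
  shows "z = 0"
proof (rule ccontr)
  assume "z \<noteq> 0"
  hence "norm z > 0" by simp
  have "norm z \<le> K * (norm z / (K + 1))"
    using assms(1)[of "norm z / (K + 1)"] \<open>norm z > 0\<close> assms(2) by auto
  also have "\<dots> = (K / (K + 1)) * norm z" by simp
  also have "\<dots> < 1 * norm z"
    by (rule mult_strict_right_mono) (use \<open>norm z > 0\<close> assms(2) in auto)
  finally show False by simp
qed

lemma has_sum_delay: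
  fixes g :: "nat \<Rightarrow> 'a::{comm_monoid_add,topological_space}"
  shows "((\<lambda>n. if k \<le> n then g (n - k) else 0) has_sum s) UNIV \<longleftrightarrow> (g has_sum s) UNIV"
proof -
  have "((\<lambda>n. if k \<le> n then g (n - k) else 0) has_sum s) UNIV \<longleftrightarrow> ((\<lambda>n. g (n - k)) has_sum s) {k..}"
    by (rule has_sum_cong_neutral) auto
  also have "\<dots> \<longleftrightarrow> (g has_sum s) UNIV"
    by (rule has_sum_reindex_bij_witness[where i="\<lambda>n. n - k" and j="\<lambda>p. p + k", symmetric]) auto
  finally show ?thesis .
qed

lemma summable_on_delay:
  fixes g :: "nat \<Rightarrow> 'a::{comm_monoid_add,topological_space}"
  shows "(\<lambda>n. if k \<le> n then g (n - k) else 0) summable_on UNIV \<longleftrightarrow> g summable_on UNIV"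
  using has_sum_delay unfolding summable_on_def by blast

lemma infsum_tail_less:
  fixes g :: "nat \<Rightarrow> real"
  assumes "g summable_on UNIV" "e > 0"
  shows "\<exists>M. infsum (\<lambda>p. if p < M then 0 else g p) UNIV < e"
proof -
  let ?S = "infsum g UNIV"
  have hs: "(g has_sum ?S) UNIV" using assms(1) by simp
  hence "(\<lambda>M. sum g {..<M}) \<longlonglongrightarrow> ?S" using has_sum_imp_sums sums_def by blast
  then obtain M where M: "\<bar>sum g {..<M} - ?S\<bar> < e"
    using assms(2) LIMSEQ_D[of "\<lambda>M. sum g {..<M}" ?S e] by (auto simp: dist_real_def)
  have "(g has_sum (?S - sum g {..<M})) (UNIV - {..<M})"
    by (rule has_sum_Diff[OF hs]) auto
  hence "((\<lambda>p. if p < M then 0 else g p) has_sum (?S - sum g {..<M})) UNIV"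
    by (subst has_sum_cong_neutral[where T="UNIV - {..<M}" and g=g]) auto
  hence "infsum (\<lambda>p. if p < M then 0 else g p) UNIV = ?S - sum g {..<M}" by (rule infsumI)
  thus ?thesis using M by (intro exI[of _ M]) linarith
qed

definition unit_seq :: "nat \<Rightarrow> nat \<Rightarrow> complex" where
  "unit_seq p q = (if q = p then 1 else 0)"

lemma unit_seq_ell2: "unit_seq p \<in> ell2 UNIV"
proof (rule ell2I)
  have "(\<lambda>q. (cmod (unit_seq p q))^2) summable_on {p}" by simp
  thus "(\<lambda>q. (cmod (unit_seq p q))^2) summable_on UNIV"
    by (subst summable_on_cong_neutral[where T="{p}" and g="\<lambda>q. (cmod (unit_seq p q))^2"])
       (auto simp: unit_seq_def)
qed simp

lemma shift_ell2: "c \<in> ell2 UNIV \<Longrightarrow> shift c \<in> ell2 UNIV"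
proof (rule ell2I)
  assume c: "c \<in> ell2 UNIV"
  have "(\<lambda>p. if 1 \<le> p then (cmod (c (p - 1)))^2 else 0) summable_on UNIV"
    using summable_on_delay[of 1 "\<lambda>p. (cmod (c p))^2"] ell2_summable[OF c] by simp
  moreover have "(\<lambda>p. (cmod (shift c p))^2) = (\<lambda>p. if 1 \<le> p then (cmod (c (p - 1)))^2 else 0)"
    by (auto simp: shift_def)
  ultimately show "(\<lambda>p. (cmod (shift c p))^2) summable_on UNIV" by simp
qed simp

lemma shift_adj_ell2: "c \<in> ell2 UNIV \<Longrightarrow> shift_adj c \<in> ell2 UNIV"
proof (rule ell2I)
  assume c: "c \<in> ell2 UNIV"
  have "(\<lambda>p. (cmod (c p))^2) summable_on range Suc"
    by (rule summable_on_subset_banach[OF ell2_summable[OF c]]) auto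
  hence "((\<lambda>p. (cmod (c p))^2) \<circ> Suc) summable_on UNIV"
    by (subst summable_on_reindex[symmetric]) auto
  thus "(\<lambda>p. (cmod (shift_adj c p))^2) summable_on UNIV" by (simp add: shift_adj_def comp_def)
qed simp

lemma proj0_ell2: "proj0 c \<in> ell2 UNIV"
proof -
  have "proj0 c = (\<lambda>q. c 0 * unit_seq 0 q)" by (auto simp: proj0_def unit_seq_def)
  thus ?thesis using ell2_scale[OF unit_seq_ell2] by simp
qed

lemma D_op_ell2:
  assumes c: "c \<in> ell2 UNIV"
  shows "D_op N c \<in> ell2 UNIV"
proof -
  have "D_op N c = (\<lambda>k. of_nat (N+1) * c k + (- complex_of_real (sqrt N)) * (shift c k + shift_adj c k))"
    by (auto simp: D_op_def ReS_def algebra_simps)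
  thus ?thesis by (simp only:) (intro ell2_add ell2_scale shift_ell2 shift_adj_ell2 c)
qed

lemma D_Omega_ell2:
  assumes c: "c \<in> ell2 UNIV"
  shows "D_Omega N c \<in> ell2 UNIV"
proof -
  have "D_Omega N c = (\<lambda>k. D_op N c k + (-1) * proj0 c k)"
    by (auto simp: D_Omega_def D_op_def)
  thus ?thesis by (simp only:) (intro ell2_add ell2_scale D_op_ell2 proj0_ell2 c)
qed

definition level :: "nat \<Rightarrow> nat \<Rightarrow> nat list set" where
  "level N n = {w. length w = n \<and> set w \<subseteq> {1..N}}"

lemma finite_level: "finite (level N n)"
  using finite_lists_length_eq[of "{1..N}" n] unfolding level_def by (simp add: conj_commute)

lemma level_subset_words: "level N n \<subseteq> words N"
  by (auto simp: words_def level_def)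

lemma level_0: "level N 0 = {[]}"
  by (auto simp: level_def)

lemma level_Suc: "level N (Suc n) = (\<lambda>(a,j). a # j) ` ({1..N} \<times> level N n)"
proof (rule Set.set_eqI)
  fix w show "w \<in> level N (Suc n) \<longleftrightarrow> w \<in> (\<lambda>(a,j). a # j) ` ({1..N} \<times> level N n)"
    by (cases w) (auto simp: level_def)
qed

lemma has_sum_by_levels:
  fixes f :: "nat list \<Rightarrow> 'c::{banach,uniform_topological_group_add}"
  assumes "(f has_sum s) (words N)"
  shows "((\<lambda>n. sum f (level N n)) has_sum s) UNIV"
proof -
  have "((\<lambda>(n,w). f w) has_sum s) (Sigma UNIV (level N))"
    using assms
    by (subst has_sum_reindex_bij_witness[where i="\<lambda>w. (length w, w)" and j="\<lambda>(n,w). w"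
          and S="Sigma UNIV (level N)" and T="words N" and g="\<lambda>(n,w). f w" and h=f and s'=s])
       (auto simp: level_def words_def subset_iff)
  from has_sum_Sigma'[OF this, of "\<lambda>n. sum f (level N n)"] show ?thesis
    by (simp add: finite_level has_sum_finiteI)
qed

lemma summable_on_words_by_levels:
  fixes f :: "nat list \<Rightarrow> real"
  assumes "\<And>w. f w \<ge> 0" "(\<lambda>n. sum f (level N n)) summable_on UNIV"
  shows "f summable_on words N"
proof -
  have "words N = (\<Union>n. level N n)" by (auto simp: words_def level_def)
  moreover have "disjoint_family (level N)" by (auto simp: disjoint_family_on_def level_def)
  ultimately show ?thesis
    by (auto intro: summable_on_UnionI[OF _ assms(2)] has_sum_finiteI finite_level assms(1))
qed

lemma has_sum_norm_by_levels:
  assumes "f \<in> ell2 (words N)"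
  shows "((\<lambda>n. \<Sum>w\<in>level N n. (cmod (f w))^2) has_sum infsum (\<lambda>w. (cmod (f w))^2) (words N)) UNIV"
  using ell2_summable[OF assms] by (intro has_sum_by_levels) simp

lemma sum_level_prod:
  fixes F :: "nat \<Rightarrow> nat \<Rightarrow> 'a::comm_semiring_1"
  shows "(\<Sum>j\<in>level N n. \<Prod>k<n. F k (j ! k)) = (\<Prod>k<n. \<Sum>a\<in>{1..N}. F k a)"
proof (induction n arbitrary: F)
  case 0 thus ?case by (simp add: level_0)
next
  case (Suc n)
  have inj: "inj_on (\<lambda>(a,j). a # j) ({1..N} \<times> level N n)" by (auto simp: inj_on_def)
  have "(\<Sum>j\<in>level N (Suc n). \<Prod>k<Suc n. F k (j ! k))
      = (\<Sum>(a,j)\<in>{1..N} \<times> level N n. \<Prod>k<Suc n. F k ((a # j) ! k))"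
    unfolding level_Suc by (subst sum.reindex[OF inj]) (simp add: case_prod_unfold)
  also have "\<dots> = (\<Sum>a\<in>{1..N}. F 0 a * (\<Sum>j\<in>level N n. \<Prod>k<n. F (Suc k) (j ! k)))"
    by (simp del: prod.lessThan_Suc add: prod.lessThan_Suc_shift sum.cartesian_product
        sum_distrib_left)
  also have "\<dots> = (\<Prod>k<Suc n. \<Sum>a\<in>{1..N}. F k a)"
    by (simp del: prod.lessThan_Suc add: Suc.IH[of "\<lambda>k. F (Suc k)"] prod.lessThan_Suc_shift
        sum_distrib_right)
  finally show ?case .
qed

lemma tensor_on_level:
  "w \<in> level N n \<Longrightarrow> length vs = n \<Longrightarrow> tensor N vs w = (\<Prod>k<n. (vs ! k) (w ! k))"
  by (auto simp: tensor_def level_def)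

lemma sum_level_cnj_tensor_mult:
  assumes "length vs = n" "length vs' = n"
  shows "(\<Sum>w\<in>level N n. cnj (tensor N vs w) * tensor N vs' w)
       = (\<Prod>k<n. \<Sum>a\<in>{1..N}. cnj ((vs ! k) a) * (vs' ! k) a)"
proof -
  have "(\<Sum>w\<in>level N n. cnj (tensor N vs w) * tensor N vs' w)
      = (\<Sum>w\<in>level N n. \<Prod>k<n. cnj ((vs ! k) (w ! k)) * (vs' ! k) (w ! k))"
    by (rule sum.cong) (auto simp: tensor_on_level assms prod.distrib)
  also have "\<dots> = (\<Prod>k<n. \<Sum>a\<in>{1..N}. cnj ((vs ! k) a) * (vs' ! k) a)"
    by (rule sum_level_prod)
  finally show ?thesis .
qed

lemma tensor_cong:
  assumes "length vs = length vs'"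
    and "\<And>k a. k < length vs \<Longrightarrow> a \<in> {1..N} \<Longrightarrow> (vs ! k) a = (vs' ! k) a"
  shows "tensor N vs = tensor N vs'"
proof (rule ext)
  fix w
  show "tensor N vs w = tensor N vs' w"
  proof (cases "length w = length vs \<and> set w \<subseteq> {1..N}")
    case True
    hence "(vs ! k) (w ! k) = (vs' ! k) (w ! k)" if "k < length w" for k
      using assms(2)[of k "w ! k"] that by (auto simp: subset_iff)
    thus ?thesis using True assms(1) unfolding tensor_def by (auto intro: prod.cong)
  qed (use assms(1) in \<open>auto simp: tensor_def\<close>)
qed

definition xtensor :: "nat \<Rightarrow> (nat \<Rightarrow> nat \<Rightarrow> complex) \<Rightarrow> nat list \<Rightarrow> nat list \<Rightarrow> complex" where
  "xtensor N x j = tensor N (map x j)"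

lemma xtensor_outside_level: "w \<notin> level N (length j) \<Longrightarrow> xtensor N x j w = 0"
  by (auto simp: xtensor_def tensor_def level_def)

lemma xtensor_snoc:
  "i \<in> {1..N} \<Longrightarrow> xtensor N x (j @ [a]) (w @ [i]) = xtensor N x j w * x a i"
  by (auto simp: xtensor_def tensor_def nth_append lessThan_Suc)

locale adapted_basis =
  fixes N :: nat and x :: "nat \<Rightarrow> nat \<Rightarrow> complex"
  assumes N_ge_1: "N \<ge> 1"
    and orthonormal: "\<forall>i\<in>{1..N}. \<forall>j\<in>{1..N}. (\<Sum>k=1..N. cnj (x i k) * x j k) = (if i = j then 1 else 0)"
    and x1: "\<forall>k\<in>{1..N}. x 1 k = s0 N k"
begin

lemma one_in_letters: "(1::nat) \<in> {1..N}"
  using N_ge_1 by simp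

lemma xtensor_orthonormal:
  assumes "j \<in> level N n" "j' \<in> level N n"
  shows "(\<Sum>w\<in>level N n. cnj (xtensor N x j w) * xtensor N x j' w) = (if j = j' then 1 else 0)"
proof -
  have lens: "length j = n" "length j' = n" using assms by (auto simp: level_def)
  have "(\<Sum>w\<in>level N n. cnj (xtensor N x j w) * xtensor N x j' w)
      = (\<Prod>k<n. if j ! k = j' ! k then 1 else 0)"
    unfolding xtensor_def
  proof (subst sum_level_cnj_tensor_mult, (simp add: lens)+, rule prod.cong)
    fix k assume "k \<in> {..<n}"
    hence "j ! k \<in> {1..N}" "j' ! k \<in> {1..N}" using assms lens by (auto simp: level_def subset_iff)
    thus "(\<Sum>a = Suc 0..N. cnj (x (j ! k) a) * x (j' ! k) a) = (if j ! k = j' ! k then 1 else 0)"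
      using orthonormal by auto
  qed simp
  also have "\<dots> = (if j = j' then 1 else 0)"
  proof (cases "j = j'")
    case False
    then obtain k where "k < n" "j ! k \<noteq> j' ! k" using lens nth_equalityI by metis
    thus ?thesis using False by (auto intro!: prod_zero)
  qed simp
  finally show ?thesis .
qed

lemma xtensor_complete:
  assumes "w \<in> level N n" "w' \<in> level N n"
  shows "(\<Sum>j\<in>level N n. cnj (xtensor N x j w) * xtensor N x j w') = (if w = w' then 1 else 0)"
proof -
  have lens: "length w = n" "length w' = n" using assms by (auto simp: level_def)
  have "(\<Sum>j\<in>level N n. cnj (xtensor N x j w) * xtensor N x j w')
      = (\<Sum>j\<in>level N n. \<Prod>k<n. cnj (x (j ! k) (w ! k)) * x (j ! k) (w' ! k))"
  proof (rule sum.cong)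
    fix j assume "j \<in> level N n"
    hence lj: "length (map x j) = n" by (simp add: level_def)
    show "cnj (xtensor N x j w) * xtensor N x j w' = (\<Prod>k<n. cnj (x (j ! k) (w ! k)) * x (j ! k) (w' ! k))"
      unfolding xtensor_def tensor_on_level[OF assms(1) lj] tensor_on_level[OF assms(2) lj] prod.distrib
      using lj by simp
  qed simp
  also have "\<dots> = (\<Prod>k<n. \<Sum>a\<in>{1..N}. cnj (x a (w ! k)) * x a (w' ! k))"
    by (rule sum_level_prod)
  also have "\<dots> = (\<Prod>k<n. if w ! k = w' ! k then 1 else 0)"
  proof (rule prod.cong)
    fix k assume "k \<in> {..<n}"
    hence letters: "w ! k \<in> {1..N}" "w' ! k \<in> {1..N}" using assms lens by (auto simp: level_def subset_iff)
    have "(\<Sum>a\<in>{1..N}. cnj (x a (w ! k)) * x a (w' ! k)) = cnj (\<Sum>a\<in>{1..N}. x a (w ! k) * cnj (x a (w' ! k)))"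
      by (simp add: mult.commute)
    also have "\<dots> = (if w ! k = w' ! k then 1 else 0)"
      using orthonormal_rows_imp_orthonormal_columns[OF orthonormal letters] by simp
    finally show "(\<Sum>a\<in>{1..N}. cnj (x a (w ! k)) * x a (w' ! k)) = (if w ! k = w' ! k then 1 else 0)" .
  qed simp
  also have "\<dots> = (if w = w' then 1 else 0)"
  proof (cases "w = w'")
    case False
    then obtain k where "k < n" "w ! k \<noteq> w' ! k" using lens nth_equalityI by metis
    thus ?thesis using False by (auto intro!: prod_zero)
  qed simp
  finally show ?thesis .
qed

lemma norm_xtensor_le_1:
  assumes j: "j \<in> level N n"
  shows "cmod (xtensor N x j w) \<le> 1"
proof (cases "w \<in> level N n")
  case True
  have "complex_of_real (\<Sum>w'\<in>level N n. (cmod (xtensor N x j w'))^2) = 1"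
    using xtensor_orthonormal[OF j j] by (simp add: sum_cnj_mult_self)
  hence "(\<Sum>w'\<in>level N n. (cmod (xtensor N x j w'))^2) = 1"
    by (simp only: of_real_eq_1_iff)
  hence "(cmod (xtensor N x j w))^2 \<le> 1"
    using member_le_sum[of w "level N n" "\<lambda>w'. (cmod (xtensor N x j w'))^2"] True finite_level
    by auto
  thus ?thesis by (simp add: power_le_one_iff abs_square_le_1)
next
  case False
  thus ?thesis using j xtensor_outside_level[of w N j x] by (auto simp: level_def)
qed

end

section \<open>Chains of words\<close>

text \<open>\<open>b\<close> indexes a chain: \<open>b = []\<close> for \<open>H_Omega\<close>, otherwise an element of \<open>Idx\<close>.\<close>
definition admissible :: "nat \<Rightarrow> nat list \<Rightarrow> bool" where
  "admissible N b \<longleftrightarrow> set b \<subseteq> {1..N} \<and> (b = [] \<or> last b \<noteq> 1)"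

definition strip_ones :: "nat list \<Rightarrow> nat list" where
  "strip_ones l = rev (dropWhile (\<lambda>a. a = 1) (rev l))"

lemma Idx_eq_admissible: "Idx N = {b. admissible N b \<and> b \<noteq> []}"
  by (auto simp: Idx_def admissible_def)

lemma admissible_Nil: "admissible N []"
  by (simp add: admissible_def)

lemma strip_ones_append_ones: "admissible N b \<Longrightarrow> strip_ones (b @ replicate p 1) = b"
proof -
  assume b: "admissible N b"
  have "dropWhile (\<lambda>a. a = 1) (rev b) = rev b"
  proof (cases b rule: rev_cases)
    case (snoc ys y) thus ?thesis using b by (auto simp: admissible_def)
  qed simp
  thus ?thesis unfolding strip_ones_def by (simp add: dropWhile_append)
qed

lemma append_ones_eq_iff:
  "admissible N b \<Longrightarrow> admissible N b' \<Longrightarrow> b @ replicate p 1 = b' @ replicate p' 1 \<Longrightarrow> b = b'"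
  by (metis strip_ones_append_ones)

lemma strip_ones_append_ones_eq: "strip_ones j @ replicate (length j - length (strip_ones j)) 1 = j"
proof -
  let ?t = "takeWhile (\<lambda>a. a = 1) (rev j)" and ?d = "dropWhile (\<lambda>a. a = 1) (rev j)"
  have t: "?t = replicate (length ?t) 1"
    by (rule replicate_length_same[symmetric]) (auto dest: set_takeWhileD)
  have "length ?t + length ?d = length j"
    by (metis length_append length_rev takeWhile_dropWhile_id)
  hence len: "length j - length (strip_ones j) = length ?t"
    by (simp add: strip_ones_def)
  have "j = rev (?t @ ?d)" by simp
  also have "\<dots> = strip_ones j @ replicate (length ?t) 1"
    by (subst t) (simp add: strip_ones_def)
  finally show ?thesis using len by simp
qed

lemma admissible_strip_ones: "set j \<subseteq> {1..N} \<Longrightarrow> admissible N (strip_ones j)"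
proof -
  assume j: "set j \<subseteq> {1..N}"
  have "set (strip_ones j) \<subseteq> set j" unfolding strip_ones_def by (auto dest: set_dropWhileD)
  moreover have "strip_ones j = [] \<or> last (strip_ones j) \<noteq> 1"
  proof (cases "dropWhile (\<lambda>a. a = 1) (rev j) = []")
    case False
    hence "hd (dropWhile (\<lambda>a. a = 1) (rev j)) \<noteq> 1" by (rule hd_dropWhile)
    thus ?thesis using False by (simp add: strip_ones_def last_rev)
  qed (simp add: strip_ones_def)
  ultimately show ?thesis using j by (auto simp: admissible_def)
qed

text \<open>\<open>chain_vec N x b c = \<Sum>\<^sub>p c\<^sub>p y\<^bsub>b 1\<^sup>p\<^esub>\<close>, where at \<open>w\<close> only the summand with \<open>p = |w| - |b|\<close>
  can be nonzero, and \<open>chain_coeff N x b f p = \<langle>y\<^bsub>b 1\<^sup>p\<^esub>, f\<rangle>\<close>.\<close>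
definition chain_vec ::
  "nat \<Rightarrow> (nat \<Rightarrow> nat \<Rightarrow> complex) \<Rightarrow> nat list \<Rightarrow> (nat \<Rightarrow> complex) \<Rightarrow> nat list \<Rightarrow> complex" where
  "chain_vec N x b c w = (if length b \<le> length w
     then c (length w - length b) * xtensor N x (b @ replicate (length w - length b) 1) w else 0)"

definition chain_coeff ::
  "nat \<Rightarrow> (nat \<Rightarrow> nat \<Rightarrow> complex) \<Rightarrow> nat list \<Rightarrow> (nat list \<Rightarrow> complex) \<Rightarrow> nat \<Rightarrow> complex" where
  "chain_coeff N x b f p =
     (\<Sum>w\<in>level N (length b + p). cnj (xtensor N x (b @ replicate p 1) w) * f w)"

lemma chain_vec_on_level: "length w = n \<Longrightarrow> length b \<le> n \<Longrightarrow>
   chain_vec N x b c w = c (n - length b) * xtensor N x (b @ replicate (n - length b) 1) w"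
  by (simp add: chain_vec_def)

lemma chain_vec_below: "length w < length b \<Longrightarrow> chain_vec N x b c w = 0"
  by (simp add: chain_vec_def)

lemma chain_vec_outside_words: "w \<notin> words N \<Longrightarrow> chain_vec N x b c w = 0"
  by (auto simp: chain_vec_def xtensor_outside_level level_def words_def)

lemma chain_vec_unit_seq: "chain_vec N x b (unit_seq p) = xtensor N x (b @ replicate p 1)"
proof (rule ext)
  fix w
  show "chain_vec N x b (unit_seq p) w = xtensor N x (b @ replicate p 1) w"
  proof (cases "length w = length b + p")
    case False
    hence "xtensor N x (b @ replicate p 1) w = 0" by (intro xtensor_outside_level) (auto simp: level_def)
    thus ?thesis using False by (auto simp: chain_vec_def unit_seq_def)
  qed (simp add: chain_vec_def unit_seq_def)
qed

lemma chain_vec_add_scale: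
  "chain_vec N x b (\<lambda>p. c p + a * d p) = (\<lambda>w. chain_vec N x b c w + a * chain_vec N x b d w)"
  by (rule ext) (simp add: chain_vec_def algebra_simps)

lemma chain_vec_diff:
  "chain_vec N x b (\<lambda>p. c p - d p) = (\<lambda>w. chain_vec N x b c w - chain_vec N x b d w)"
  by (rule ext) (simp add: chain_vec_def algebra_simps)

lemma chain_vec_zero: "chain_vec N x b (\<lambda>p. 0) = (\<lambda>w. 0)"
  by (rule ext) (simp add: chain_vec_def)

lemma chain_coeff_add_scale:
  "chain_coeff N x b (\<lambda>w. f w + a * g w) = (\<lambda>p. chain_coeff N x b f p + a * chain_coeff N x b g p)"
  by (rule ext) (simp add: chain_coeff_def algebra_simps sum.distrib sum_distrib_left)

lemma chain_coeff_diff: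
  "chain_coeff N x b (\<lambda>w. f w - g w) = (\<lambda>p. chain_coeff N x b f p - chain_coeff N x b g p)"
  by (rule ext) (simp add: chain_coeff_def algebra_simps sum_subtractf)

lemma chain_coeff_zero: "chain_coeff N x b (\<lambda>w. 0) = (\<lambda>p. 0)"
  by (rule ext) (simp add: chain_coeff_def)

lemma chain_vec_truncate:
  "chain_vec N x b (\<lambda>p. if p < M then c p else 0) = (\<Sum>p<M. cscale (c p) (chain_vec N x b (unit_seq p)))"
proof (rule ext)
  fix w
  have "(\<Sum>p<M. cscale (c p) (chain_vec N x b (unit_seq p))) w
      = (\<Sum>p<M. c p * chain_vec N x b (unit_seq p) w)"
    by (simp add: sum_fun_apply cscale_def)
  also have "\<dots> = chain_vec N x b (\<lambda>p. if p < M then c p else 0) w"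
  proof (cases "length b \<le> length w")
    case True
    let ?q = "length w - length b"
    have "(\<Sum>p<M. c p * chain_vec N x b (unit_seq p) w)
        = (\<Sum>p\<in>{..<M}. if p = ?q then c ?q * xtensor N x (b @ replicate ?q 1) w else 0)"
      by (rule sum.cong) (auto simp: chain_vec_def unit_seq_def True)
    thus ?thesis using True by (simp add: chain_vec_def)
  qed (simp add: chain_vec_def)
  finally show "chain_vec N x b (\<lambda>p. if p < M then c p else 0) w
      = (\<Sum>p<M. cscale (c p) (chain_vec N x b (unit_seq p))) w" ..
qed

lemma H_Omega_eq_H_idx_Nil: "H_Omega N = H_idx N x []"
proof -
  have "{tensor N []} \<union> {tensor N (replicate p (s0 N)) | p. p \<ge> 1}
      = {tensor N (map x [] @ replicate p (s0 N)) | p. True}"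
  proof (intro equalityI subsetI)
    fix v assume "v \<in> {tensor N (map x [] @ replicate p (s0 N)) | p. True}"
    then obtain p where "v = tensor N (replicate p (s0 N))" by auto
    thus "v \<in> {tensor N []} \<union> {tensor N (replicate p (s0 N)) | p. p \<ge> 1}"
      by (cases "p = 0") (simp, intro UnI2 CollectI exI[of _ p], simp)
  qed (auto intro: exI[of _ 0])
  thus ?thesis unfolding H_Omega_def H_idx_def by simp
qed

context adapted_basis
begin

lemma tensor_s0_eq_xtensor:
  "tensor N (map x b @ replicate p (s0 N)) = xtensor N x (b @ replicate p 1)"
  unfolding xtensor_def by (rule tensor_cong) (use x1 in \<open>auto simp: nth_append\<close>)

lemma H_idx_eq_closed_span_chain:
  "H_idx N x b = closed_span (words N) (range (\<lambda>p. chain_vec N x b (unit_seq p)))"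
proof -
  have "{tensor N (map x b @ replicate p (s0 N)) | p. True} = range (\<lambda>p. chain_vec N x b (unit_seq p))"
    by (auto simp: tensor_s0_eq_xtensor chain_vec_unit_seq)
  thus ?thesis unfolding H_idx_def by simp
qed

lemma append_ones_in_level: "admissible N b \<Longrightarrow> b @ replicate p 1 \<in> level N (length b + p)"
  using one_in_letters by (auto simp: admissible_def level_def)

lemma sum_level_chain_vec_inner:
  assumes b: "admissible N b" and b': "admissible N b'"
  shows "(\<Sum>w\<in>level N n. cnj (chain_vec N x b c w) * chain_vec N x b' d w)
       = (if length b \<le> n \<and> b = b' then cnj (c (n - length b)) * d (n - length b) else 0)"
proof (cases "length b \<le> n \<and> length b' \<le> n")
  case True
  let ?j = "b @ replicate (n - length b) 1" and ?j' = "b' @ replicate (n - length b') 1"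
  have "(\<Sum>w\<in>level N n. cnj (chain_vec N x b c w) * chain_vec N x b' d w)
      = (\<Sum>w\<in>level N n. (cnj (c (n - length b)) * d (n - length b'))
           * (cnj (xtensor N x ?j w) * xtensor N x ?j' w))"
    by (rule sum.cong) (use True in \<open>auto simp: chain_vec_on_level level_def\<close>)
  also have "\<dots> = cnj (c (n - length b)) * d (n - length b') * (if ?j = ?j' then 1 else 0)"
    using xtensor_orthonormal append_ones_in_level[OF b, of "n - length b"]
      append_ones_in_level[OF b', of "n - length b'"] True
    by (simp add: sum_distrib_left[symmetric])
  also have "(?j = ?j') = (b = b')" using append_ones_eq_iff[OF b b'] by auto
  finally show ?thesis using True by auto
next
  case False
  have "(\<Sum>w\<in>level N n. cnj (chain_vec N x b c w) * chain_vec N x b' d w) = 0"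
    by (rule sum.neutral) (use False in \<open>auto simp: chain_vec_below level_def\<close>)
  thus ?thesis using False by auto
qed

lemma sum_level_chain_vec_norm:
  assumes b: "admissible N b"
  shows "(\<Sum>w\<in>level N n. (cmod (chain_vec N x b c w))^2)
       = (if length b \<le> n then (cmod (c (n - length b)))^2 else 0)"
proof -
  have "complex_of_real (\<Sum>w\<in>level N n. (cmod (chain_vec N x b c w))^2)
      = (\<Sum>w\<in>level N n. cnj (chain_vec N x b c w) * chain_vec N x b c w)"
    by (rule sum_cnj_mult_self[symmetric])
  also have "\<dots> = (if length b \<le> n then cnj (c (n - length b)) * c (n - length b) else 0)"
    by (simp add: sum_level_chain_vec_inner[OF b b])
  also have "\<dots> = complex_of_real (if length b \<le> n then (cmod (c (n - length b)))^2 else 0)"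
    by (simp add: cnj_mult_self)
  finally show ?thesis using of_real_eq_iff by blast
qed

text \<open>Level \<open>|b| + p\<close> of \<open>chain_vec N x b c\<close> carries exactly the mass \<open>|c\<^sub>p|\<^sup>2\<close>.\<close>
lemma has_sum_norm_chain_vec_iff:
  assumes b: "admissible N b"
  shows "((\<lambda>w. (cmod (chain_vec N x b c w))^2) has_sum s) (words N)
     \<longleftrightarrow> ((\<lambda>p. (cmod (c p))^2) has_sum s) UNIV"
proof
  assume "((\<lambda>w. (cmod (chain_vec N x b c w))^2) has_sum s) (words N)"
  hence "((\<lambda>n. if length b \<le> n then (cmod (c (n - length b)))^2 else 0) has_sum s) UNIV"
    using has_sum_by_levels by (fastforce simp: sum_level_chain_vec_norm[OF b])
  thus "((\<lambda>p. (cmod (c p))^2) has_sum s) UNIV"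
    using has_sum_delay[of "length b" "\<lambda>p. (cmod (c p))^2" s] by simp
next
  assume "((\<lambda>p. (cmod (c p))^2) has_sum s) UNIV"
  hence levels: "((\<lambda>n. \<Sum>w\<in>level N n. (cmod (chain_vec N x b c w))^2) has_sum s) UNIV"
    using has_sum_delay[of "length b" "\<lambda>p. (cmod (c p))^2" s]
    by (simp add: sum_level_chain_vec_norm[OF b])
  hence sm: "(\<lambda>w. (cmod (chain_vec N x b c w))^2) summable_on words N"
    by (intro summable_on_words_by_levels) (auto dest: has_sum_imp_summable)
  have "((\<lambda>n. \<Sum>w\<in>level N n. (cmod (chain_vec N x b c w))^2)
          has_sum infsum (\<lambda>w. (cmod (chain_vec N x b c w))^2) (words N)) UNIV"
    using sm by (intro has_sum_by_levels) simp
  hence "infsum (\<lambda>w. (cmod (chain_vec N x b c w))^2) (words N) = s"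
    using levels has_sum_unique by blast
  thus "((\<lambda>w. (cmod (chain_vec N x b c w))^2) has_sum s) (words N)"
    using sm by (metis has_sum_infsum)
qed

lemma chain_vec_ell2_iff:
  assumes b: "admissible N b"
  shows "chain_vec N x b c \<in> ell2 (words N) \<longleftrightarrow> c \<in> ell2 UNIV"
  using has_sum_norm_chain_vec_iff[OF b, of c]
  by (auto simp: ell2_def chain_vec_outside_words summable_on_def)

lemma l2norm_chain_vec:
  assumes b: "admissible N b" and c: "c \<in> ell2 UNIV"
  shows "l2norm (words N) (chain_vec N x b c) = l2norm UNIV c"
  using has_sum_norm_chain_vec_iff[OF b, of c] ell2_summable[OF c]
  by (simp add: l2norm_def infsumI)

lemma l2inner_chain_vec:
  assumes b: "admissible N b" and b': "admissible N b'" and c: "c \<in> ell2 UNIV" and d: "d \<in> ell2 UNIV"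
  shows "l2inner (words N) (chain_vec N x b c) (chain_vec N x b' d)
       = (if b = b' then l2inner UNIV c d else 0)"
proof -
  let ?s = "infsum (\<lambda>w. cnj (chain_vec N x b c w) * chain_vec N x b' d w) (words N)"
  have "chain_vec N x b c \<in> ell2 (words N)" "chain_vec N x b' d \<in> ell2 (words N)"
    using chain_vec_ell2_iff b b' c d by auto
  hence "((\<lambda>w. cnj (chain_vec N x b c w) * chain_vec N x b' d w) has_sum ?s) (words N)"
    using summable_on_cnj_mult has_sum_infsum by blast
  hence "((\<lambda>n. \<Sum>w\<in>level N n. cnj (chain_vec N x b c w) * chain_vec N x b' d w) has_sum ?s) UNIV"
    by (rule has_sum_by_levels)
  hence hs: "((\<lambda>n. if length b \<le> n \<and> b = b' then cnj (c (n - length b)) * d (n - length b) else 0)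
               has_sum ?s) UNIV"
    by (simp add: sum_level_chain_vec_inner[OF b b'])
  show ?thesis
  proof (cases "b = b'")
    case True
    hence "((\<lambda>p. cnj (c p) * d p) has_sum ?s) UNIV"
      using hs has_sum_delay[of "length b" "\<lambda>p. cnj (c p) * d p" ?s] by simp
    thus ?thesis using True by (simp add: l2inner_def infsumI)
  next
    case False
    hence "?s = 0" using hs has_sum_unique[OF _ has_sum_0] by auto
    thus ?thesis using False by (simp add: l2inner_def)
  qed
qed

lemma chain_coeff_chain_vec: "admissible N b \<Longrightarrow> chain_coeff N x b (chain_vec N x b c) = c"
proof (rule ext)
  fix p assume b: "admissible N b"
  let ?j = "b @ replicate p 1"
  have "chain_coeff N x b (chain_vec N x b c) p
      = (\<Sum>w\<in>level N (length b + p). c p * (cnj (xtensor N x ?j w) * xtensor N x ?j w))"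
    unfolding chain_coeff_def by (rule sum.cong) (auto simp: chain_vec_on_level level_def)
  also have "\<dots> = c p"
    using xtensor_orthonormal[OF append_ones_in_level[OF b] append_ones_in_level[OF b]]
    by (simp add: sum_distrib_left[symmetric])
  finally show "chain_coeff N x b (chain_vec N x b c) p = c p" .
qed

lemma chain_vec_in_H_idx:
  assumes b: "admissible N b" and c: "c \<in> ell2 UNIV"
  shows "chain_vec N x b c \<in> H_idx N x b"
  unfolding H_idx_eq_closed_span_chain closed_span_def
proof (intro CollectI conjI allI impI)
  show "chain_vec N x b c \<in> ell2 (words N)" using chain_vec_ell2_iff[OF b] c by simp
  fix e :: real assume e: "e > 0"
  obtain M where M: "infsum (\<lambda>p. if p < M then 0 else (cmod (c p))^2) UNIV < e^2"
    using infsum_tail_less[of "\<lambda>p. (cmod (c p))^2" "e^2"] ell2_summable[OF c] e by auto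
  let ?head = "\<lambda>p. if p < M then c p else 0" and ?tail = "\<lambda>p. if p < M then 0 else c p"
  have "chain_vec N x b ?head \<in> cspan (range (\<lambda>p. chain_vec N x b (unit_seq p)))"
    unfolding chain_vec_truncate cspan_eq_span
    by (intro cfun.span_sum cfun.span_scale cfun.span_base) auto
  moreover have "l2norm (words N) (\<lambda>w. chain_vec N x b c w - chain_vec N x b ?head w) < e"
  proof -
    have tail: "?tail \<in> ell2 UNIV"
      by (rule ell2I, simp, rule summable_on_comparison_test[OF ell2_summable[OF c]]) auto
    have "(\<lambda>p. c p - ?head p) = ?tail" by auto
    hence "l2norm (words N) (\<lambda>w. chain_vec N x b c w - chain_vec N x b ?head w)
         = l2norm UNIV ?tail"
      using chain_vec_diff[of N x b c ?head] l2norm_chain_vec[OF b tail] by simp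
    also have "\<dots> = sqrt (infsum (\<lambda>p. if p < M then 0 else (cmod (c p))^2) UNIV)"
      unfolding l2norm_def by (rule arg_cong[where f=sqrt], rule infsum_cong) auto
    also have "\<dots> < e" using M e real_sqrt_less_iff[of _ "e^2"] by simp
    finally show ?thesis .
  qed
  ultimately show "\<exists>g\<in>cspan (range (\<lambda>p. chain_vec N x b (unit_seq p))).
      l2norm (words N) (\<lambda>w. chain_vec N x b c w - g w) < e"
    by blast
qed

lemma cspan_chain_eq_chain_vec_chain_coeff:
  assumes b: "admissible N b" and g: "g \<in> cspan (range (\<lambda>p. chain_vec N x b (unit_seq p)))"
  shows "g = chain_vec N x b (chain_coeff N x b g)"
  using g unfolding cspan_eq_span
proof (induction rule: cfun.span_induct_alt)
  case base
  show ?case by (simp add: func_zero chain_coeff_zero chain_vec_zero)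
next
  case (step a v y)
  then obtain q where v: "v = chain_vec N x b (unit_seq q)" by auto
  have "chain_coeff N x b (cscale a v + y) = (\<lambda>p. chain_coeff N x b y p + a * unit_seq q p)"
    using chain_coeff_add_scale[of N x b y a v]
    by (simp add: cscale_def func_plus add.commute v chain_coeff_chain_vec[OF b])
  hence "chain_vec N x b (chain_coeff N x b (cscale a v + y))
       = (\<lambda>w. chain_vec N x b (chain_coeff N x b y) w + a * v w)"
    by (simp add: chain_vec_add_scale v)
  thus ?case using step.IH by (simp add: cscale_def func_plus add.commute)
qed

lemma norm_chain_coeff_le:
  assumes b: "admissible N b" and h: "h \<in> ell2 (words N)"
  shows "cmod (chain_coeff N x b h p) \<le> real (card (level N (length b + p))) * l2norm (words N) h"
proof -
  have "cmod (chain_coeff N x b h p)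
      \<le> (\<Sum>w\<in>level N (length b + p). cmod (xtensor N x (b @ replicate p 1) w) * cmod (h w))"
    unfolding chain_coeff_def by (rule order_trans[OF norm_sum]) (simp add: norm_mult)
  also have "\<dots> \<le> (\<Sum>w\<in>level N (length b + p). 1 * l2norm (words N) h)"
    using norm_xtensor_le_1[OF append_ones_in_level[OF b]]
      norm_le_l2norm[OF h subsetD[OF level_subset_words]]
    by (intro sum_mono mult_mono) auto
  finally show ?thesis by simp
qed

text \<open>Only finitely many coordinates are involved, so no Bessel inequality is needed.\<close>
lemma norm_chain_residual_le:
  assumes b: "admissible N b" and h: "h \<in> ell2 (words N)" and w: "w \<in> words N"
  shows "cmod (h w - chain_vec N x b (chain_coeff N x b h) w)
       \<le> (1 + real (card (level N (length w)))) * l2norm (words N) h"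
proof -
  have "cmod (chain_vec N x b (chain_coeff N x b h) w) \<le> real (card (level N (length w))) * l2norm (words N) h"
  proof (cases "length b \<le> length w")
    case True
    let ?p = "length w - length b"
    have "cmod (chain_vec N x b (chain_coeff N x b h) w)
        = cmod (chain_coeff N x b h ?p) * cmod (xtensor N x (b @ replicate ?p 1) w)"
      using True by (simp add: chain_vec_def norm_mult)
    also have "\<dots> \<le> cmod (chain_coeff N x b h ?p) * 1"
      by (rule mult_left_mono) (use norm_xtensor_le_1[OF append_ones_in_level[OF b, of ?p]] in auto)
    also have "\<dots> \<le> real (card (level N (length w))) * l2norm (words N) h"
      using norm_chain_coeff_le[OF b h, of ?p] True by simp
    finally show ?thesis .
  qed (simp add: chain_vec_def l2norm_nonneg)
  thus ?thesis
    using norm_le_l2norm[OF h w] norm_triangle_ineq4[of "h w" "chain_vec N x b (chain_coeff N x b h) w"]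
    by (simp add: algebra_simps)
qed

lemma H_idx_eq_chain_vec_chain_coeff:
  assumes b: "admissible N b" and f: "f \<in> H_idx N x b"
  shows "f = chain_vec N x b (chain_coeff N x b f)"
proof (rule ext)
  fix w
  let ?G = "range (\<lambda>p. chain_vec N x b (unit_seq p))"
  have fcs: "f \<in> closed_span (words N) ?G" using f unfolding H_idx_eq_closed_span_chain .
  hence fl: "f \<in> ell2 (words N)" using closed_span_subset_ell2 by blast
  show "f w = chain_vec N x b (chain_coeff N x b f) w"
  proof (cases "w \<in> words N")
    case False thus ?thesis using fl by (simp add: ell2_vanish chain_vec_outside_words)
  next
    case w: True
    let ?K = "1 + real (card (level N (length w)))"
    have "f w - chain_vec N x b (chain_coeff N x b f) w = 0"
    proof (rule eq_0_if_norm_le_mult_all[where K="?K"])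
      fix e :: real assume "e > 0"
      then obtain g where g: "g \<in> cspan ?G" and ge: "l2norm (words N) (\<lambda>w. f w - g w) < e"
        using fcs unfolding closed_span_def by auto
      let ?h = "\<lambda>w. f w - g w"
      have hl: "?h \<in> ell2 (words N)"
        using ell2_diff[OF fl] cspan_subset_ell2[of ?G] g chain_vec_ell2_iff[OF b] unit_seq_ell2 by blast
      have "f w - chain_vec N x b (chain_coeff N x b f) w = ?h w - chain_vec N x b (chain_coeff N x b ?h) w"
        using fun_cong[OF cspan_chain_eq_chain_vec_chain_coeff[OF b g], of w]
        by (simp add: chain_coeff_diff chain_vec_diff)
      also have "cmod \<dots> \<le> ?K * l2norm (words N) ?h" by (rule norm_chain_residual_le[OF b hl w])
      also have "\<dots> \<le> ?K * e" using ge by (intro mult_left_mono) auto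
      finally show "cmod (f w - chain_vec N x b (chain_coeff N x b f) w) \<le> ?K * e" .
    qed simp
    thus ?thesis by simp
  qed
qed

lemma H_idx_eq_image_chain_vec:
  assumes b: "admissible N b"
  shows "H_idx N x b = chain_vec N x b ` ell2 UNIV"
proof (intro Set.set_eqI iffI)
  fix f assume f: "f \<in> H_idx N x b"
  hence "f \<in> ell2 (words N)"
    using closed_span_subset_ell2 H_idx_eq_closed_span_chain by blast
  hence "chain_coeff N x b f \<in> ell2 UNIV"
    using H_idx_eq_chain_vec_chain_coeff[OF b f] chain_vec_ell2_iff[OF b] by metis
  thus "f \<in> chain_vec N x b ` ell2 UNIV"
    using H_idx_eq_chain_vec_chain_coeff[OF b f] by blast
qed (use chain_vec_in_H_idx[OF b] in blast)

end

section \<open>The Laplacian on a chain\<close>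

definition chain_op :: "nat \<Rightarrow> nat list \<Rightarrow> (nat \<Rightarrow> complex) \<Rightarrow> (nat \<Rightarrow> complex)" where
  "chain_op N b = (if b = [] then D_Omega N else D_op N)"

lemma chain_op_apply: "chain_op N b c p = of_nat (N + 1) * c p
    - complex_of_real (sqrt (real N)) * ((if p = 0 then 0 else c (p - 1)) + c (Suc p))
    - (if b = [] \<and> p = 0 then c 0 else 0)"
  by (auto simp: chain_op_def D_Omega_def D_op_def ReS_def shift_def shift_adj_def proj0_def)

lemma chain_op_ell2: "c \<in> ell2 UNIV \<Longrightarrow> chain_op N b c \<in> ell2 UNIV"
  by (simp add: chain_op_def D_op_ell2 D_Omega_ell2)

context adapted_basis
begin

abbreviation sqrtN :: complex where
  "sqrtN \<equiv> complex_of_real (sqrt (real N))"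

lemma sqrtN_nonzero: "sqrtN \<noteq> 0"
  using N_ge_1 by simp

lemma x1_eq: "i \<in> {1..N} \<Longrightarrow> x 1 i = complex_of_real (1 / sqrt (real N))"
  using x1 by (simp add: s0_def)

lemma sum_x1: "(\<Sum>i=1..N. x 1 i) = sqrtN"
proof -
  have "(\<Sum>i=1..N. x 1 i) = (\<Sum>i=1..N. complex_of_real (1 / sqrt (real N)))"
    by (rule sum.cong) (auto simp only: x1_eq)
  also have "\<dots> = complex_of_real (real N * (1 / sqrt (real N)))" by simp
  also have "real N * (1 / sqrt (real N)) = sqrt (real N)"
    using N_ge_1 by (simp add: real_div_sqrt)
  finally show ?thesis .
qed

lemma sum_x_eq_0: assumes "a \<in> {1..N}" "a \<noteq> 1" shows "(\<Sum>i=1..N. x a i) = 0"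
proof -
  have "(\<Sum>k=1..N. cnj (x 1 k) * x a k) = 0" using orthonormal one_in_letters assms by auto
  moreover have "(\<Sum>k=1..N. cnj (x 1 k) * x a k) = complex_of_real (1 / sqrt (real N)) * (\<Sum>k=1..N. x a k)"
    unfolding sum_distrib_left by (rule sum.cong) (auto simp: x1_eq[simplified])
  ultimately show ?thesis using N_ge_1 by simp
qed

lemma sum_children_chain_vec:
  assumes "length b \<le> length w"
  defines "p \<equiv> length w - length b"
  shows "(\<Sum>i=1..N. chain_vec N x b c (w @ [i]))
       = sqrtN * c (Suc p) * xtensor N x (b @ replicate p 1) w"
proof -
  have "(\<Sum>i=1..N. chain_vec N x b c (w @ [i]))
      = (\<Sum>i=1..N. c (Suc p) * xtensor N x (b @ replicate p 1) w * x 1 i)"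
  proof (rule sum.cong[OF refl])
    fix i assume i: "i \<in> {1..N}"
    have "chain_vec N x b c (w @ [i]) = c (Suc p) * xtensor N x ((b @ replicate p 1) @ [1]) (w @ [i])"
      using assms by (simp add: chain_vec_def Suc_diff_le replicate_append_same)
    thus "chain_vec N x b c (w @ [i]) = c (Suc p) * xtensor N x (b @ replicate p 1) w * x 1 i"
      by (simp only: xtensor_snoc[OF i] mult.assoc)
  qed
  also have "\<dots> = c (Suc p) * xtensor N x (b @ replicate p 1) w * (\<Sum>i=1..N. x 1 i)"
    by (simp add: sum_distrib_left)
  finally show ?thesis by (simp add: sum_x1[simplified] mult_ac)
qed

text \<open>At the foot of a chain the children contract against \<open>x\<^sub>a \<perp> s\<^sub>0\<close>, where \<open>a \<noteq> 1\<close> is the last letter of \<open>b\<close>.\<close>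
lemma sum_children_chain_vec_below:
  assumes b: "admissible N b" and "length w < length b"
  shows "(\<Sum>i=1..N. chain_vec N x b c (w @ [i])) = 0"
proof (cases "Suc (length w) = length b")
  case True
  hence "b \<noteq> []" by auto
  hence last_b: "last b \<in> {1..N}" "last b \<noteq> 1" and b_eq: "b = butlast b @ [last b]"
    using b unfolding admissible_def by (auto intro: subsetD[OF _ last_in_set])
  have "(\<Sum>i=1..N. chain_vec N x b c (w @ [i]))
      = (\<Sum>i=1..N. c 0 * xtensor N x (butlast b) w * x (last b) i)"
  proof (rule sum.cong[OF refl])
    fix i assume i: "i \<in> {1..N}"
    have "chain_vec N x b c (w @ [i]) = c 0 * xtensor N x (butlast b @ [last b]) (w @ [i])"
      using True b_eq by (simp add: chain_vec_def)
    thus "chain_vec N x b c (w @ [i]) = c 0 * xtensor N x (butlast b) w * x (last b) i"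
      by (simp add: xtensor_snoc[OF i])
  qed
  also have "\<dots> = 0" using sum_x_eq_0[OF last_b] by (simp add: sum_distrib_left[symmetric])
  finally show ?thesis .
qed (use assms in \<open>auto intro!: sum.neutral chain_vec_below\<close>)

lemma chain_vec_parent:
  assumes w: "w \<in> words N" "w \<noteq> []" and "length b \<le> length w"
  defines "p \<equiv> length w - length b"
  shows "chain_vec N x b c (butlast w)
       = (if p = 0 then 0 else sqrtN * c (p - 1) * xtensor N x (b @ replicate p 1) w)"
proof (cases "p = 0")
  case True
  thus ?thesis using assms by (cases w) (auto intro!: chain_vec_below)
next
  case False
  then obtain q where "p = Suc q" by (cases p) auto
  hence ones: "b @ replicate p 1 = (b @ replicate (p - 1) 1) @ [1]"
    by (simp add: replicate_append_same)
  have w_eq: "w = butlast w @ [last w]" and last_w: "last w \<in> {1..N}"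
    using w by (auto simp: words_def intro: subsetD[OF _ last_in_set])
  have "xtensor N x (b @ replicate p 1) w = xtensor N x (b @ replicate (p - 1) 1) (butlast w) * x 1 (last w)"
    by (subst w_eq, subst ones) (rule xtensor_snoc[OF last_w])
  moreover have "sqrtN * x 1 (last w) = 1"
    using x1_eq[OF last_w] N_ge_1 by (simp flip: of_real_mult)
  moreover have "chain_vec N x b c (butlast w) = c (p - 1) * xtensor N x (b @ replicate (p - 1) 1) (butlast w)"
    using assms False by (simp add: chain_vec_def)
  ultimately show ?thesis using False by (simp add: mult_ac)
qed

lemma lap_chain_vec:
  assumes b: "admissible N b"
  shows "lap N (chain_vec N x b c) = chain_vec N x b (chain_op N b c)"
proof (rule ext)
  fix w
  let ?f = "chain_vec N x b c"
  show "lap N ?f w = chain_vec N x b (chain_op N b c) w"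
  proof (cases "w \<in> words N")
    case False thus ?thesis by (simp add: lap_def chain_vec_outside_words)
  next
    case w: True
    have lap_w: "lap N ?f w = (of_nat N + (if w = [] then 0 else 1)) * ?f w
        - (\<Sum>i=1..N. ?f (w @ [i])) - (if w = [] then 0 else ?f (butlast w))"
      using w by (simp add: lap_def)
    show ?thesis
    proof (cases "length b \<le> length w")
      case True
      define p where "p = length w - length b"
      let ?y = "xtensor N x (b @ replicate p 1) w"
      have root: "(w = []) = (b = [] \<and> p = 0)" using True p_def by auto
      have parent: "(if w = [] then 0 else ?f (butlast w)) = (if p = 0 then 0 else sqrtN * c (p - 1) * ?y)"
        using chain_vec_parent[OF w _ True, of c] root unfolding p_def[symmetric] by (cases "w = []") simp_all
      have "lap N ?f w = ((of_nat N + (if w = [] then 0 else 1)) * c p - sqrtN * c (Suc p)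
             - (if p = 0 then 0 else sqrtN * c (p - 1))) * ?y"
        unfolding lap_w parent sum_children_chain_vec[OF True]
        using True by (simp add: chain_vec_def p_def algebra_simps)
      also have "\<dots> = chain_vec N x b (chain_op N b c) w"
        using True unfolding chain_op_apply root by (auto simp: chain_vec_def p_def algebra_simps)
      finally show ?thesis .
    next
      case False
      thus ?thesis
        unfolding lap_w using sum_children_chain_vec_below[OF b] chain_vec_below[of _ b]
        by (auto simp: length_butlast)
    qed
  qed
qed

end

section \<open>Cyclicity\<close>

definition orbit_seq :: "nat \<Rightarrow> nat list \<Rightarrow> nat \<Rightarrow> nat \<Rightarrow> complex" where
  "orbit_seq N b k = (chain_op N b ^^ k) (unit_seq 0)"

lemma orbit_seq_support:
  "(\<forall>q>k. orbit_seq N b k q = 0) \<and> orbit_seq N b k k = (- complex_of_real (sqrt (real N)))^k"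
proof (induction k)
  case 0 thus ?case by (simp add: orbit_seq_def unit_seq_def)
next
  case (Suc k)
  have step: "orbit_seq N b (Suc k) = chain_op N b (orbit_seq N b k)" by (simp add: orbit_seq_def)
  have zero: "\<And>q. q > k \<Longrightarrow> orbit_seq N b k q = 0" using Suc.IH by blast
  have "\<forall>q>Suc k. orbit_seq N b (Suc k) q = 0"
    unfolding step chain_op_apply using zero by auto
  moreover have "orbit_seq N b (Suc k) (Suc k) = (- complex_of_real (sqrt (real N)))^(Suc k)"
    unfolding step chain_op_apply using zero[of "Suc k"] zero[of "Suc (Suc k)"] Suc.IH by simp
  ultimately show ?case by blast
qed

lemma orbit_seq_truncate: "orbit_seq N b k = (\<lambda>p. if p < Suc k then orbit_seq N b k p else 0)"
  using orbit_seq_support[of k N b] by (auto simp: not_less_eq)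

context adapted_basis
begin

lemma lap_pow_chain_vec:
  "admissible N b \<Longrightarrow> (lap N ^^ k) (chain_vec N x b (unit_seq 0)) = chain_vec N x b (orbit_seq N b k)"
  by (induction k) (simp_all add: orbit_seq_def lap_chain_vec)

text \<open>The orbit vectors are triangular in the chain basis with diagonal \<open>(-\<surd>N)\<^sup>k \<noteq> 0\<close>.\<close>
lemma span_lap_orbit_eq_span_chain:
  assumes b: "admissible N b"
  shows "cfun.span {(lap N ^^ k) (chain_vec N x b (unit_seq 0)) | k. True}
       = cfun.span (range (\<lambda>p. chain_vec N x b (unit_seq p)))"
    (is "cfun.span ?orbit = cfun.span ?chain")
proof -
  have orbit: "?orbit = range (\<lambda>k. chain_vec N x b (orbit_seq N b k))"
    by (auto simp: lap_pow_chain_vec[OF b])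
  have expand: "chain_vec N x b (orbit_seq N b k)
      = (\<Sum>p<Suc k. cscale (orbit_seq N b k p) (chain_vec N x b (unit_seq p)))" for k
    by (subst orbit_seq_truncate) (rule chain_vec_truncate)
  have "?orbit \<subseteq> cfun.span ?chain"
  proof
    fix v assume "v \<in> ?orbit"
    then obtain k where v: "v = chain_vec N x b (orbit_seq N b k)" unfolding orbit by blast
    show "v \<in> cfun.span ?chain"
      unfolding v expand by (intro cfun.span_sum cfun.span_scale cfun.span_base rangeI)
  qed
  moreover have "chain_vec N x b (unit_seq k) \<in> cfun.span ?orbit" for k
  proof (induction k rule: less_induct)
    case (less k)
    let ?lower = "\<Sum>p<k. cscale (orbit_seq N b k p) (chain_vec N x b (unit_seq p))"
    have "chain_vec N x b (orbit_seq N b k) = cscale (orbit_seq N b k k) (chain_vec N x b (unit_seq k)) + ?lower"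
      unfolding expand by (simp add: add.commute)
    hence eq: "chain_vec N x b (unit_seq k)
        = cscale (inverse ((- sqrtN)^k)) (chain_vec N x b (orbit_seq N b k) - ?lower)"
      using orbit_seq_support[of k N b] sqrtN_nonzero by simp
    have "chain_vec N x b (orbit_seq N b k) \<in> cfun.span ?orbit"
      unfolding orbit by (intro cfun.span_base) auto
    moreover have "?lower \<in> cfun.span ?orbit"
      using less.IH by (intro cfun.span_sum cfun.span_scale) auto
    ultimately show ?case unfolding eq by (intro cfun.span_scale cfun.span_diff)
  qed
  ultimately show ?thesis unfolding cfun.span_eq by blast
qed

lemma cyclic_subspace_H_idx:
  assumes b: "admissible N b"
  shows "cyclic_subspace (words N) (lap N) (H_idx N x b)"
  unfolding cyclic_subspace_def
proof
  show "chain_vec N x b (unit_seq 0) \<in> H_idx N x b" by (rule chain_vec_in_H_idx[OF b unit_seq_ell2])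
  have span_eq: "cspan {(lap N ^^ k) (chain_vec N x b (unit_seq 0)) | k. True}
      = cspan (range (\<lambda>p. chain_vec N x b (unit_seq p)))"
    unfolding cspan_eq_span by (rule span_lap_orbit_eq_span_chain[OF b])
  show "H_idx N x b = closed_span (words N) {(lap N ^^ k) (chain_vec N x b (unit_seq 0)) | k. True}"
    unfolding H_idx_eq_closed_span_chain by (rule closed_span_cong[OF span_eq, symmetric])
qed

section \<open>Orthogonality and unitary equivalence\<close>

lemma l2inner_H_idx_eq_0:
  assumes b: "admissible N b" and b': "admissible N b'" and "b \<noteq> b'"
    and f: "f \<in> H_idx N x b" and g: "g \<in> H_idx N x b'"
  shows "l2inner (words N) f g = 0"
  using f g assms(3) l2inner_chain_vec[OF b b']
  unfolding H_idx_eq_image_chain_vec[OF b] H_idx_eq_image_chain_vec[OF b'] by auto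

lemma unitarily_equivalent_H_idx:
  assumes b: "admissible N b"
  shows "unitarily_equivalent (words N) (lap N) (H_idx N x b) UNIV (chain_op N b) (ell2 UNIV)"
  unfolding unitarily_equivalent_def H_idx_eq_image_chain_vec[OF b]
proof (intro conjI ballI exI[of _ "chain_coeff N x b"])
  fix f assume "f \<in> chain_vec N x b ` ell2 UNIV"
  then obtain c where c: "c \<in> ell2 UNIV" "f = chain_vec N x b c" by blast
  show "lap N f \<in> chain_vec N x b ` ell2 UNIV"
    unfolding c(2) lap_chain_vec[OF b] using chain_op_ell2[OF c(1)] by blast
  show "chain_coeff N x b (lap N f) = chain_op N b (chain_coeff N x b f)"
    unfolding c(2) lap_chain_vec[OF b] chain_coeff_chain_vec[OF b] ..
next
  show "bij_betw (chain_coeff N x b) (chain_vec N x b ` ell2 UNIV) (ell2 UNIV)"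
    by (rule bij_betw_byWitness[where f'="chain_vec N x b"]) (auto simp: chain_coeff_chain_vec[OF b])
next
  fix f g assume "f \<in> chain_vec N x b ` ell2 UNIV" "g \<in> chain_vec N x b ` ell2 UNIV"
  then obtain c d where "c \<in> ell2 UNIV" "f = chain_vec N x b c" "d \<in> ell2 UNIV" "g = chain_vec N x b d"
    by blast
  thus "\<forall>a. chain_coeff N x b (\<lambda>w. f w + a * g w) = (\<lambda>p. chain_coeff N x b f p + a * chain_coeff N x b g p)"
    and "l2inner UNIV (chain_coeff N x b f) (chain_coeff N x b g) = l2inner (words N) f g"
    by (simp_all add: chain_coeff_add_scale chain_coeff_chain_vec[OF b] l2inner_chain_vec[OF b b])
qed

section \<open>Completeness\<close>

lemma indicator_eq_sum_xtensor:
  assumes w0: "w0 \<in> level N n"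
  shows "(\<lambda>w. if w = w0 then 1 else 0) = (\<Sum>j\<in>level N n. cscale (cnj (xtensor N x j w0)) (xtensor N x j))"
proof (rule ext)
  fix w
  have "(\<Sum>j\<in>level N n. cscale (cnj (xtensor N x j w0)) (xtensor N x j)) w
      = (\<Sum>j\<in>level N n. cnj (xtensor N x j w0) * xtensor N x j w)"
    by (simp add: sum_fun_apply cscale_def)
  also have "\<dots> = (if w = w0 then 1 else 0)"
  proof (cases "w \<in> level N n")
    case True thus ?thesis using xtensor_complete[OF w0 True] by auto
  next
    case False
    have "(\<Sum>j\<in>level N n. cnj (xtensor N x j w0) * xtensor N x j w) = 0"
      by (rule sum.neutral) (use False in \<open>auto simp: xtensor_outside_level level_def\<close>)
    thus ?thesis using False w0 by auto
  qed
  finally show "(if w = w0 then 1 else 0) = (\<Sum>j\<in>level N n. cscale (cnj (xtensor N x j w0)) (xtensor N x j)) w"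
    by simp
qed

lemma level_truncation_in_cspan:
  assumes S: "xtensor N x ` words N \<subseteq> S" and f: "f \<in> ell2 (words N)"
  shows "(\<lambda>w. if length w < M then f w else 0) \<in> cspan S"
proof -
  let ?ind = "\<lambda>w0 w. if w = w0 then (1::complex) else 0"
  have ind: "?ind w0 \<in> cfun.span S" if "w0 \<in> level N n" for w0 n
    unfolding indicator_eq_sum_xtensor[OF that]
    by (intro cfun.span_sum cfun.span_scale cfun.span_base) (use S level_subset_words in blast)
  have "(\<lambda>w. if length w < M then f w else 0) = (\<Sum>n<M. \<Sum>w0\<in>level N n. cscale (f w0) (?ind w0))"
  proof (rule ext)
    fix w
    have "(\<Sum>n<M. \<Sum>w0\<in>level N n. cscale (f w0) (?ind w0)) w
        = (\<Sum>n<M. \<Sum>w0\<in>level N n. if w = w0 then f w else 0)"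
      by (auto simp: sum_fun_apply cscale_def intro!: sum.cong)
    also have "\<dots> = (\<Sum>n<M. if w \<in> level N n then f w else 0)"
      by (simp add: sum.delta' finite_level)
    also have "\<dots> = (\<Sum>n<M. if n = length w then (if w \<in> words N then f w else 0) else 0)"
      by (intro sum.cong refl) (auto simp: level_def words_def)
    finally have "(\<Sum>n<M. \<Sum>w0\<in>level N n. cscale (f w0) (?ind w0)) w
        = (\<Sum>n<M. if n = length w then (if w \<in> words N then f w else 0) else 0)" .
    thus "(if length w < M then f w else 0) = (\<Sum>n<M. \<Sum>w0\<in>level N n. cscale (f w0) (?ind w0)) w"
      using ell2_vanish[OF f] by (auto simp: sum.delta')
  qed
  also have "\<dots> \<in> cfun.span S" by (intro cfun.span_sum cfun.span_scale ind) auto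
  finally show ?thesis unfolding cspan_eq_span .
qed

lemma ell2_subset_closed_span:
  assumes S: "xtensor N x ` words N \<subseteq> S"
  shows "ell2 (words N) \<subseteq> closed_span (words N) S"
proof
  fix f assume f: "f \<in> ell2 (words N)"
  show "f \<in> closed_span (words N) S"
    unfolding closed_span_def
  proof (intro CollectI conjI allI impI f)
    fix e :: real assume e: "e > 0"
    let ?a = "\<lambda>n. \<Sum>w\<in>level N n. (cmod (f w))^2"
    obtain M where M: "infsum (\<lambda>n. if n < M then 0 else ?a n) UNIV < e^2"
      using infsum_tail_less[of ?a "e^2"] has_sum_norm_by_levels[OF f] e
      by (auto dest: has_sum_imp_summable)
    let ?tail = "\<lambda>w. if length w < M then 0 else f w"
    have tail: "?tail \<in> ell2 (words N)"
      by (rule ell2I) (use ell2_vanish[OF f] in simp,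
          rule summable_on_comparison_test[OF ell2_summable[OF f]], auto)
    have "(\<lambda>n. \<Sum>w\<in>level N n. (cmod (?tail w))^2) = (\<lambda>n. if n < M then 0 else ?a n)"
      by (auto simp: level_def intro!: sum.neutral sum.cong)
    hence "((\<lambda>n. if n < M then 0 else ?a n) has_sum infsum (\<lambda>w. (cmod (?tail w))^2) (words N)) UNIV"
      using has_sum_norm_by_levels[OF tail] by simp
    hence "infsum (\<lambda>w. (cmod (?tail w))^2) (words N) < e^2"
      using M infsumI by fastforce
    hence "l2norm (words N) ?tail < e"
      unfolding l2norm_def using e real_sqrt_less_iff[of _ "e^2"] by simp
    moreover have "(\<lambda>w. f w - (if length w < M then f w else 0)) = ?tail" by auto
    ultimately have "l2norm (words N) (\<lambda>w. f w - (if length w < M then f w else 0)) < e"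
      by (simp only:)
    moreover have "(\<lambda>w. if length w < M then f w else 0) \<in> cspan S"
      by (rule level_truncation_in_cspan[OF S f])
    ultimately show "\<exists>g\<in>cspan S. l2norm (words N) (\<lambda>w. f w - g w) < e"
      by (rule bexI[where x = "\<lambda>w. if length w < M then f w else 0"])
  qed
qed

lemma xtensor_in_H_idx_strip_ones:
  assumes "j \<in> words N"
  shows "xtensor N x j \<in> H_idx N x (strip_ones j)"
proof -
  have "admissible N (strip_ones j)"
    using assms by (intro admissible_strip_ones) (simp add: words_def)
  hence "chain_vec N x (strip_ones j) (unit_seq (length j - length (strip_ones j))) \<in> H_idx N x (strip_ones j)"
    by (rule chain_vec_in_H_idx[OF _ unit_seq_ell2])
  thus ?thesis by (simp only: chain_vec_unit_seq strip_ones_append_ones_eq)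
qed

lemma closed_span_H_Omega_H_idx_eq_ell2:
  "closed_span (words N) (H_Omega N \<union> (\<Union>I\<in>Idx N. H_idx N x I)) = ell2 (words N)"
proof -
  have "xtensor N x j \<in> H_Omega N \<union> (\<Union>I\<in>Idx N. H_idx N x I)" if "j \<in> words N" for j
    using xtensor_in_H_idx_strip_ones[OF that] admissible_strip_ones[of j N] that
    by (cases "strip_ones j = []") (auto simp: H_Omega_eq_H_idx_Nil[of N x] Idx_eq_admissible words_def)
  hence "xtensor N x ` words N \<subseteq> H_Omega N \<union> (\<Union>I\<in>Idx N. H_idx N x I)" by blast
  thus ?thesis using ell2_subset_closed_span closed_span_subset_ell2 by blast
qed

end

theorem theorem3p16:
  fixes N :: nat and x :: "nat \<Rightarrow> nat \<Rightarrow> complex"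
  assumes "N \<ge> 1"
    and orthonormal: "\<forall>i\<in>{1..N}. \<forall>j\<in>{1..N}.
           (\<Sum>k=1..N. cnj (x i k) * x j k) = (if i = j then 1 else 0)"
    and x1: "\<forall>k\<in>{1..N}. x 1 k = s0 N k"
  shows
    "(\<forall>f\<in>H_Omega N. \<forall>I\<in>Idx N. \<forall>g\<in>H_idx N x I. l2inner (words N) f g = 0)
     \<and> (\<forall>I\<in>Idx N. \<forall>J\<in>Idx N. I \<noteq> J \<longrightarrow>
          (\<forall>f\<in>H_idx N x I. \<forall>g\<in>H_idx N x J. l2inner (words N) f g = 0))
     \<and> closed_span (words N) (H_Omega N \<union> (\<Union>I\<in>Idx N. H_idx N x I)) = ell2 (words N)
     \<and> cyclic_subspace (words N) (lap N) (H_Omega N)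
     \<and> (\<forall>I\<in>Idx N. cyclic_subspace (words N) (lap N) (H_idx N x I))
     \<and> unitarily_equivalent (words N) (lap N) (H_Omega N) UNIV (D_Omega N) (ell2 UNIV)
     \<and> (\<forall>I\<in>Idx N. unitarily_equivalent (words N) (lap N) (H_idx N x I) UNIV (D_op N) (ell2 UNIV))"
proof -
  interpret adapted_basis N x using assms by unfold_locales
  have Omega: "H_Omega N = H_idx N x []" by (rule H_Omega_eq_H_idx_Nil)
  show ?thesis
  proof (intro conjI ballI impI)
    fix f I g assume "f \<in> H_Omega N" "I \<in> Idx N" "g \<in> H_idx N x I"
    thus "l2inner (words N) f g = 0"
      using l2inner_H_idx_eq_0[OF admissible_Nil] by (auto simp: Omega Idx_eq_admissible)
  next
    fix I J f g assume "I \<in> Idx N" "J \<in> Idx N" "I \<noteq> J" "f \<in> H_idx N x I" "g \<in> H_idx N x J"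
    thus "l2inner (words N) f g = 0" using l2inner_H_idx_eq_0 by (auto simp: Idx_eq_admissible)
  next
    show "closed_span (words N) (H_Omega N \<union> (\<Union>I\<in>Idx N. H_idx N x I)) = ell2 (words N)"
      by (rule closed_span_H_Omega_H_idx_eq_ell2)
  next
    show "cyclic_subspace (words N) (lap N) (H_Omega N)"
      unfolding Omega by (rule cyclic_subspace_H_idx[OF admissible_Nil])
  next
    fix I assume "I \<in> Idx N"
    thus "cyclic_subspace (words N) (lap N) (H_idx N x I)"
      using cyclic_subspace_H_idx by (simp add: Idx_eq_admissible)
  next
    show "unitarily_equivalent (words N) (lap N) (H_Omega N) UNIV (D_Omega N) (ell2 UNIV)"
      using unitarily_equivalent_H_idx[OF admissible_Nil] by (simp add: Omega chain_op_def)
  next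
    fix I assume "I \<in> Idx N"
    thus "unitarily_equivalent (words N) (lap N) (H_idx N x I) UNIV (D_op N) (ell2 UNIV)"
      using unitarily_equivalent_H_idx[of I] by (simp add: Idx_eq_admissible chain_op_def)
  qed
qed

end
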